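(* Let $n \ge 1$ and $k \in \{1, \ldots, n\}$. Let red tanks $R_1, \ldots, R_n$ each initially contain $1$ unit of water and blue tanks $B_1, \ldots, B_n$ each initially contain $0$. Run the moving window strategy: for $i = 1, \ldots, n-k+1$ (in order), for $j = i, \ldots, i+k-1$ (in order), equilibrate $R_i$ and $B_j$. Then for each $i \in \{1, \ldots, n-k+1\}$ and $j \in \{i, \ldots, i+k-1\}$, immediately after the equilibration of $R_i$ and $B_j$, both $R_i$ and $B_j$ contain at most \[ \frac{k + i - j}{k+1} \] units of water.
   Context: Equilibrating two tanks $a \neq b$ with water levels $x_a, x_b$ replaces both levels by $\frac{x_a+x_b}{2}$ and leaves all other tanks unchanged. *)

theory Defs
  imports Complex_Main
begin

datatype tank = Red nat | Blue nat

type_synonym state = "tank \<Rightarrow> real"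

definition equilibrate :: "tank \<Rightarrow> tank \<Rightarrow> state \<Rightarrow> state" where
  "equilibrate a b x = x(a := (x a + x b) / 2, b := (x a + x b) / 2)"

definition init_state :: "nat \<Rightarrow> state" where
  "init_state n = (\<lambda>t. case t of Red i \<Rightarrow> (if 1 \<le> i \<and> i \<le> n then 1 else 0) | Blue j \<Rightarrow> 0)"

definition window_steps :: "nat \<Rightarrow> nat \<Rightarrow> (nat \<times> nat) list" where
  "window_steps n k = concat (map (\<lambda>i. map (\<lambda>j. (i, j)) [i..<i + k]) [1..<n - k + 2])"

definition run_steps :: "(nat \<times> nat) list \<Rightarrow> state \<Rightarrow> state" where
  "run_steps ps x = fold (\<lambda>(i, j) s. equilibrate (Red i) (Blue j) s) ps x"

text \<open>State immediately after the m-th (0-based) step of the strategy.\<close>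
definition state_after :: "nat \<Rightarrow> nat \<Rightarrow> nat \<Rightarrow> state" where
  "state_after n k m = run_steps (take (Suc m) (window_steps n k)) (init_state n)"

end

theory Submission
  imports Defs
begin

(* Invariant window_invariant k i t x, valid once R_i has been equilibrated with
   B_i, ..., B_(i+t-1): R_i holds at most (k+1-t)/(k+1), each B_j it has met at most
   (k+i-j)/(k+1), each later B_j at most max 0 ((k+i-j-1)/(k+1)), and the unused red tanks at
   most 1.  Averaging the bounds for R_i and B_(i+t) gives (k-t)/(k+1), the claimed bound for the
   step j = i+t, and this new value restores the invariant, also when R_i is done and the window
   moves on to R_(i+1), which still holds at most 1 = (k+1)/(k+1). *)

lemma equilibrate_apply:
  "equilibrate a b x c = (if c = a \<or> c = b then (x a + x b) / 2 else x c)"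
  unfolding equilibrate_def by auto

lemma run_steps_append_single:
  "run_steps (ps @ [(i, j)]) x = equilibrate (Red i) (Blue j) (run_steps ps x)"
  unfolding run_steps_def by simp

definition window_step :: "nat \<Rightarrow> nat \<Rightarrow> nat \<times> nat" where
  "window_step k l = (l div k + 1, l div k + 1 + l mod k)"

lemma window_steps_conv_map:
  "window_steps n k = map (window_step k) [0..<(n - k + 1) * k]"
proof -
  have "concat (map (\<lambda>i. map (\<lambda>j. (i, j)) [i..<i + k]) [1..<Suc L])
      = map (window_step k) [0..<L * k]" for L
  proof (induction L)
    case 0
    then show ?case by simp
  next
    case (Suc L)
    have "map (window_step k) [L * k..<L * k + k] = map (\<lambda>j. (Suc L, j)) [Suc L..<Suc L + k]"
      by (rule nth_equalityI) (simp_all add: window_step_def del: upt_Suc)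
    moreover have "[0..<Suc L * k] = [0..<L * k] @ [L * k..<L * k + k]"
      using upt_add_eq_append[of 0 "L * k" k] by (simp add: add.commute)
    ultimately show ?case
      using Suc.IH by (simp add: upt_Suc_append del: upt_Suc)
  qed
  from this[of "n - k + 1"] show ?thesis
    unfolding window_steps_def by simp
qed

lemma state_after_eq_equilibrate:
  assumes "m < length (window_steps n k)"
  shows "state_after n k m
    = equilibrate (Red (m div k + 1)) (Blue (m div k + 1 + m mod k))
        (run_steps (map (window_step k) [0..<m]) (init_state n))"
proof -
  have "take (Suc m) (window_steps n k) = map (window_step k) [0..<m] @ [window_step k m]"
    using assms unfolding window_steps_conv_map by (simp add: take_map)
  then show ?thesis
    unfolding state_after_def by (simp add: run_steps_append_single window_step_def)
qed

definition window_invariant :: "nat \<Rightarrow> nat \<Rightarrow> nat \<Rightarrow> state \<Rightarrow> bool" where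
  "window_invariant k i t x \<longleftrightarrow> (\<forall>i' > i. x (Red i') \<le> 1)
     \<and> x (Red i) \<le> (real k + 1 - real t) / (real k + 1)
     \<and> (\<forall>j. i \<le> j \<and> j < i + t \<longrightarrow> x (Blue j) \<le> (real k + real i - real j) / (real k + 1))
     \<and> (\<forall>j. i + t \<le> j \<longrightarrow> x (Blue j) \<le> max 0 ((real k + real i - real j - 1) / (real k + 1)))"

lemma window_invariant_init: "window_invariant k 1 0 (init_state n)"
  unfolding window_invariant_def init_state_def by (auto simp: field_simps)

lemma window_invariant_average_le:
  assumes "window_invariant k i t x" and "t < k"
  shows "(x (Red i) + x (Blue (i + t))) / 2 \<le> (real k - real t) / (real k + 1)"
proof -
  have red: "x (Red i) \<le> (real k + 1 - real t) / (real k + 1)"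
    using assms(1) unfolding window_invariant_def by simp
  have "x (Blue (i + t)) \<le> max 0 ((real k - 1 - real t) / (real k + 1))"
    using assms(1) unfolding window_invariant_def by (auto simp: algebra_simps)
  also have "\<dots> = (real k - 1 - real t) / (real k + 1)"
    using assms(2) by simp
  finally have blue: "x (Blue (i + t)) \<le> (real k - 1 - real t) / (real k + 1)" .
  from red blue have "(x (Red i) + x (Blue (i + t))) / 2
      \<le> ((real k + 1 - real t) / (real k + 1) + (real k - 1 - real t) / (real k + 1)) / 2"
    by (intro divide_right_mono add_mono) simp_all
  also have "\<dots> = (real k - real t) / (real k + 1)"
    by (simp add: add_divide_distrib[symmetric]) (simp add: divide_simps algebra_simps)
  finally show ?thesis .
qed

lemma window_invariant_within_window:
  assumes inv: "window_invariant k i t x" and "Suc t < k"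
  shows "window_invariant k i (Suc t) (equilibrate (Red i) (Blue (i + t)) x)"
proof -
  have "(x (Red i) + x (Blue (i + t))) / 2 \<le> (real k - real t) / (real k + 1)"
    using window_invariant_average_le[OF inv] assms(2) by simp
  with inv show ?thesis
    unfolding window_invariant_def equilibrate_apply by (auto simp: less_Suc_eq)
qed

lemma window_invariant_next_window:
  assumes inv: "window_invariant k i t x" and k: "Suc t = k"
  shows "window_invariant k (Suc i) 0 (equilibrate (Red i) (Blue (i + t)) x)"
proof -
  let ?v = "(x (Red i) + x (Blue (i + t))) / 2"
  let ?y = "equilibrate (Red i) (Blue (i + t)) x"
  have avg: "?v \<le> (real k - real t) / (real k + 1)"
    using window_invariant_average_le[OF inv] k by simp
  have red: "\<forall>i' \<ge> Suc i. ?y (Red i') \<le> 1"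
    using inv unfolding window_invariant_def equilibrate_apply by simp
  have blue: "?y (Blue j) \<le> max 0 ((real k + real (Suc i) - real j - 1) / (real k + 1))"
    if "Suc i \<le> j" for j
  proof (cases j "i + t" rule: linorder_cases)
    case less
    then have "x (Blue j) \<le> (real k + real i - real j) / (real k + 1)"
      using inv that unfolding window_invariant_def by auto
    then show ?thesis
      using less unfolding equilibrate_apply by (simp add: le_max_iff_disj algebra_simps)
  next
    case equal
    then have "?y (Blue j) = ?v"
      by (simp add: equilibrate_apply)
    also note avg
    also have "(real k - real t) / (real k + 1)
        \<le> max 0 ((real k + real (Suc i) - real j - 1) / (real k + 1))"
      using equal by (simp add: le_max_iff_disj)
    finally show ?thesis .
  next
    case greater
    then have "?y (Blue j) = x (Blue j)"
      by (simp add: equilibrate_apply)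
    also have "\<dots> \<le> max 0 ((real k + real i - real j - 1) / (real k + 1))"
      using inv greater unfolding window_invariant_def by simp
    also have "\<dots> \<le> max 0 ((real k + real (Suc i) - real j - 1) / (real k + 1))"
      by (intro max.mono divide_right_mono) auto
    finally show ?thesis .
  qed
  show ?thesis
    using red blue unfolding window_invariant_def by simp
qed

lemma window_invariant_run_window_steps:
  assumes "1 \<le> k"
  shows "window_invariant k (m div k + 1) (m mod k)
    (run_steps (map (window_step k) [0..<m]) (init_state n))"
proof (induction m)
  case 0
  show ?case
    using window_invariant_init by (simp add: run_steps_def)
next
  case (Suc m)
  have "m mod k < k"
    using assms by simp
  then consider "Suc (m mod k) < k" | "Suc (m mod k) = k"
    by linarith
  then show ?case
  proof cases
    case 1
    from window_invariant_within_window[OF Suc.IH this] this show ?thesis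
      by (simp add: run_steps_append_single window_step_def mod_Suc div_Suc)
  next
    case 2
    from window_invariant_next_window[OF Suc.IH this] this show ?thesis
      by (simp add: run_steps_append_single window_step_def mod_Suc div_Suc)
  qed
qed

theorem mainTheorem5:
  fixes n k m i j :: nat
  assumes "1 \<le> n" and "1 \<le> k" and "k \<le> n"
    and "m < length (window_steps n k)"
    and "window_steps n k ! m = (i, j)"
  shows "state_after n k m (Red i) \<le> (real k + real i - real j) / (real k + 1)
     \<and> state_after n k m (Blue j) \<le> (real k + real i - real j) / (real k + 1)"
proof -
  let ?x = "run_steps (map (window_step k) [0..<m]) (init_state n)"
  have ij: "i = m div k + 1" "j = i + m mod k"
    using assms(4,5) by (simp_all add: window_steps_conv_map window_step_def)
  have "window_invariant k i (m mod k) ?x"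
    using window_invariant_run_window_steps[OF assms(2)] ij by simp
  then have "(?x (Red i) + ?x (Blue (i + m mod k))) / 2 \<le> (real k - real (m mod k)) / (real k + 1)"
    by (rule window_invariant_average_le) (use assms(2) in simp)
  moreover have "state_after n k m = equilibrate (Red i) (Blue j) ?x"
    using state_after_eq_equilibrate[OF assms(4)] ij by simp
  moreover have "real k + real i - real j = real k - real (m mod k)"
    using ij by simp
  ultimately show ?thesis
    using ij(2) by (simp add: equilibrate_apply)
qed

end
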